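(* Let $H$ be a connected graph with $k=|V(H)|>1$ vertices that does not contain two false twins. Then no deterministic online algorithm (without advice) solving the Delayed Connected $H$-Node-Deletion Problem has competitive ratio smaller than $k$.
   Context: All graphs are finite, simple and undirected. Two distinct vertices are false twins if they have the same open neighborhood (in particular they are non-adjacent). An induced copy of $H$ in $G$ is an induced subgraph isomorphic to $H$; $G$ is $H$-free if it has none. An online graph $G$ has vertices $v_1,\dots,v_n$ revealed one at a time (with edges to earlier vertices); $G_t=G[\{v_1,\dots,v_t\}]$. Delayed Connected $H$-Node-Deletion Problem (for a fixed connected $H$): an online algorithm must choose sets $S_1\subseteq\dots\subseteq S_n$ with $S_t\subseteq V(G_t)$ and $G_t-S_t$ $H$-free for each $t$, where $S_t$ depends only on $G_t$; the cost is $|S_n|$. $\mathrm{OPT}(G)$ is the minimum size of $S\subseteq V(G)$ with $G-S$ $H$-free. An algorithm is $c$-competitive if there is a constant $\alpha\ge0$ with cost $\le c\cdot \mathrm{OPT}(G)+\alpha$ for every online graph $G$; its competitive ratio is the infimum of such $c\ge1$. *)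

theory Defs
  imports Main "HOL-Library.Extended_Real"
begin

definition simple_graph_on :: "'a set \<Rightarrow> ('a \<Rightarrow> 'a \<Rightarrow> bool) \<Rightarrow> bool" where
  "simple_graph_on V E \<longleftrightarrow> finite V \<and> (\<forall>x\<in>V. \<not> E x x) \<and> (\<forall>x\<in>V. \<forall>y\<in>V. E x y \<longrightarrow> E y x)"

definition connected_graph :: "'a set \<Rightarrow> ('a \<Rightarrow> 'a \<Rightarrow> bool) \<Rightarrow> bool" where
  "connected_graph V E \<longleftrightarrow> V \<noteq> {} \<and>
     (\<forall>u\<in>V. \<forall>v\<in>V. (\<lambda>x y. x \<in> V \<and> y \<in> V \<and> E x y)\<^sup>*\<^sup>* u v)"

definition false_twins :: "'a set \<Rightarrow> ('a \<Rightarrow> 'a \<Rightarrow> bool) \<Rightarrow> 'a \<Rightarrow> 'a \<Rightarrow> bool" where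
  "false_twins V E u v \<longleftrightarrow> u \<in> V \<and> v \<in> V \<and> u \<noteq> v \<and>
     {w \<in> V. E u w} = {w \<in> V. E v w}"

definition has_induced_copy ::
  "'h set \<Rightarrow> ('h \<Rightarrow> 'h \<Rightarrow> bool) \<Rightarrow> 'a set \<Rightarrow> ('a \<Rightarrow> 'a \<Rightarrow> bool) \<Rightarrow> bool" where
  "has_induced_copy VH EH V E \<longleftrightarrow>
     (\<exists>f. inj_on f VH \<and> f ` VH \<subseteq> V \<and> (\<forall>x\<in>VH. \<forall>y\<in>VH. EH x y \<longleftrightarrow> E (f x) (f y)))"

definition H_free ::
  "'h set \<Rightarrow> ('h \<Rightarrow> 'h \<Rightarrow> bool) \<Rightarrow> 'a set \<Rightarrow> ('a \<Rightarrow> 'a \<Rightarrow> bool) \<Rightarrow> bool" where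
  "H_free VH EH V E \<longleftrightarrow> \<not> has_induced_copy VH EH V E"

text \<open>Online graphs: the vertices are v_1,...,v_n, represented by 0,...,n-1 (revealed in this
  order); the edges are given by a symmetric irreflexive relation E on nat (only its restriction
  to {..<n} matters). G_t is the induced subgraph on {..<t}.\<close>

definition sym_irrefl :: "(nat \<Rightarrow> nat \<Rightarrow> bool) \<Rightarrow> bool" where
  "sym_irrefl E \<longleftrightarrow> (\<forall>x. \<not> E x x) \<and> (\<forall>x y. E x y \<longrightarrow> E y x)"

text \<open>A deterministic online algorithm: A t E is the set S_t chosen after the t-th vertex
  is revealed, for the online graph E.\<close>
definition valid_online_alg ::
  "'h set \<Rightarrow> ('h \<Rightarrow> 'h \<Rightarrow> bool) \<Rightarrow> (nat \<Rightarrow> (nat \<Rightarrow> nat \<Rightarrow> bool) \<Rightarrow> nat set) \<Rightarrow> bool" where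
  "valid_online_alg VH EH A \<longleftrightarrow>
     (\<forall>t E E'. (\<forall>i<t. \<forall>j<t. E i j = E' i j) \<longrightarrow> A t E = A t E') \<and>
     (\<forall>t E. sym_irrefl E \<longrightarrow>
        A t E \<subseteq> {..<t} \<and> A t E \<subseteq> A (Suc t) E \<and> H_free VH EH ({..<t} - A t E) E)"

definition OPT :: "'h set \<Rightarrow> ('h \<Rightarrow> 'h \<Rightarrow> bool) \<Rightarrow> nat \<Rightarrow> (nat \<Rightarrow> nat \<Rightarrow> bool) \<Rightarrow> nat" where
  "OPT VH EH n E = (LEAST m. \<exists>S. S \<subseteq> {..<n} \<and> card S = m \<and> H_free VH EH ({..<n} - S) E)"

definition competitive ::
  "'h set \<Rightarrow> ('h \<Rightarrow> 'h \<Rightarrow> bool) \<Rightarrow> (nat \<Rightarrow> (nat \<Rightarrow> nat \<Rightarrow> bool) \<Rightarrow> nat set) \<Rightarrow> real \<Rightarrow> bool" where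
  "competitive VH EH A c \<longleftrightarrow>
     (\<exists>\<alpha>::real. \<alpha> \<ge> 0 \<and> (\<forall>n E. sym_irrefl E \<longrightarrow>
        real (card (A n E)) \<le> c * real (OPT VH EH n E) + \<alpha>))"

text \<open>Competitive ratio: infimum of all c \<ge> 1 for which A is c-competitive (\<infinity> if none).\<close>
definition competitive_ratio ::
  "'h set \<Rightarrow> ('h \<Rightarrow> 'h \<Rightarrow> bool) \<Rightarrow> (nat \<Rightarrow> (nat \<Rightarrow> nat \<Rightarrow> bool) \<Rightarrow> nat set) \<Rightarrow> ereal" where
  "competitive_ratio VH EH A = (INF c \<in> {c. c \<ge> 1 \<and> competitive VH EH A c}. ereal c)"

end

theory Submission
  imports Defs
begin

text \<open>The adversary reveals a graph in which every vertex is labelled by a vertex of H and two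
  vertices are adjacent iff their labels are. Whatever the algorithm keeps after step t is H-free,
  so some label is missing among the kept vertices; the adversary gives the next vertex such a
  label. The kept vertices then carry pairwise distinct labels, so at most k = |V(H)| of them
  survive and the algorithm pays at least t - k after t steps. Vertices with equal labels are
  false twins, and H has none, so an induced copy of H uses every label once; deleting the
  rarest label class, of size at most t/k, therefore destroys all copies.\<close>

definition blowup :: "('h \<Rightarrow> 'h \<Rightarrow> bool) \<Rightarrow> (nat \<Rightarrow> 'h) \<Rightarrow> nat \<Rightarrow> nat \<Rightarrow> bool" where
  "blowup EH g i j = EH (g i) (g j)"

lemma sym_irrefl_blowup:
  assumes "simple_graph_on VH EH" "\<forall>i. g i \<in> VH"
  shows "sym_irrefl (blowup EH g)"
  using assms unfolding simple_graph_on_def sym_irrefl_def blowup_def by blast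

lemma has_induced_copy_blowup:
  assumes "VH \<subseteq> g ` U"
  shows "has_induced_copy VH EH U (blowup EH g)"
  unfolding has_induced_copy_def
proof (intro exI conjI)
  show "inj_on (inv_into U g) VH" using assms by (rule inj_on_inv_into)
  show "inv_into U g ` VH \<subseteq> U" using assms by (auto intro: inv_into_into)
  have "g (inv_into U g x) = x" if "x \<in> VH" for x
    using assms that by (blast intro: f_inv_into_f)
  then show "\<forall>x\<in>VH. \<forall>y\<in>VH. EH x y \<longleftrightarrow> blowup EH g (inv_into U g x) (inv_into U g y)"
    by (simp add: blowup_def)
qed

lemma induced_copy_blowup_inj_labels:
  assumes twin_free: "\<forall>u v. \<not> false_twins VH EH u v"
    and f: "\<forall>x\<in>VH. \<forall>y\<in>VH. EH x y \<longleftrightarrow> blowup EH g (f x) (f y)"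
  shows "inj_on (g \<circ> f) VH"
proof (rule inj_onI, rule ccontr)
  fix x y assume xy: "x \<in> VH" "y \<in> VH" "(g \<circ> f) x = (g \<circ> f) y" "x \<noteq> y"
  have "{w \<in> VH. EH x w} = {w \<in> VH. EH y w}"
    using f xy by (auto simp: blowup_def)
  then have "false_twins VH EH x y" using xy unfolding false_twins_def by blast
  with twin_free show False by blast
qed

lemma H_free_blowup_delete_label:
  assumes "finite VH" "\<forall>u v. \<not> false_twins VH EH u v"
    and "h \<in> VH" "g ` U \<subseteq> VH"
  shows "H_free VH EH (U - {i. g i = h}) (blowup EH g)"
  unfolding H_free_def has_induced_copy_def
proof clarify
  fix f assume f_sub: "f ` VH \<subseteq> U - {i. g i = h}"
    and f_edges: "\<forall>x\<in>VH. \<forall>y\<in>VH. EH x y \<longleftrightarrow> blowup EH g (f x) (f y)"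
  have "inj_on (g \<circ> f) VH"
    using induced_copy_blowup_inj_labels[OF assms(2) f_edges] .
  moreover have "(g \<circ> f) ` VH \<subseteq> VH - {h}" using f_sub assms(4) by auto
  ultimately have "card VH \<le> card (VH - {h})"
    using card_inj_on_le assms(1) by blast
  then show False using assms(1,3) card_Diff1_less leD by metis
qed

lemma OPT_le_card:
  assumes "S \<subseteq> {..<n}" "H_free VH EH ({..<n} - S) E"
  shows "OPT VH EH n E \<le> card S"
  unfolding OPT_def using assms by (intro Least_le) blast

lemma card_mult_OPT_blowup_le:
  assumes "finite VH" "VH \<noteq> {}" "\<forall>u v. \<not> false_twins VH EH u v"
    and labels: "\<forall>i. g i \<in> VH"
  shows "card VH * OPT VH EH n (blowup EH g) \<le> n"
proof -
  define C where "C h = {i. i < n \<and> g i = h}" for h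
  obtain h where h: "h \<in> VH" and rarest: "\<forall>h'\<in>VH. card (C h) \<le> card (C h')"
    using ex_has_least_nat[of "\<lambda>h. h \<in> VH" _ "\<lambda>h. card (C h)"] assms(2) by blast
  have "{..<n} = (\<Union>h'\<in>VH. C h')" using labels unfolding C_def by auto
  then have "n = card (\<Union>h'\<in>VH. C h')" by (metis card_lessThan)
  also have "\<dots> = (\<Sum>h'\<in>VH. card (C h'))"
    by (rule card_UN_disjoint) (use assms(1) in \<open>auto simp: C_def\<close>)
  finally have "n = (\<Sum>h'\<in>VH. card (C h'))" .
  then have "card VH * card (C h) \<le> n"
    using sum_bounded_below[of VH "card (C h)" "\<lambda>h'. card (C h')"] rarest by auto
  moreover have "OPT VH EH n (blowup EH g) \<le> card (C h)"
  proof (rule OPT_le_card)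
    show "C h \<subseteq> {..<n}" unfolding C_def by auto
    have "{..<n} - C h = {..<n} - {i. g i = h}" unfolding C_def by auto
    then show "H_free VH EH ({..<n} - C h) (blowup EH g)"
      using H_free_blowup_delete_label[OF assms(1,3) h] labels by auto
  qed
  ultimately show ?thesis by (meson le_trans mult_le_mono2)
qed

lemma inj_on_labels_survivors:
  assumes mono: "\<And>t. S t \<subseteq> S (Suc t)"
    and fresh: "\<And>t i. i < t \<Longrightarrow> i \<notin> S t \<Longrightarrow> g i \<noteq> g t"
  shows "inj_on g ({..<t} - S t)"
proof (induction t)
  case 0 then show ?case by simp
next
  case (Suc t)
  have "g t \<notin> g ` ({..<t} - S t)"
  proof
    assume "g t \<in> g ` ({..<t} - S t)"
    then obtain i where "i < t" "i \<notin> S t" "g i = g t" by auto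
    with fresh show False by blast
  qed
  with Suc.IH have "inj_on g (insert t ({..<t} - S t))" by simp
  moreover have "{..<Suc t} - S (Suc t) \<subseteq> insert t ({..<t} - S t)" using mono[of t] by auto
  ultimately show ?case by (rule inj_on_subset)
qed

lemma le_card_deleted_add_card_labels:
  assumes "S \<subseteq> {..<t}" "inj_on g ({..<t} - S)" "g ` {..<t} \<subseteq> V" "finite V"
  shows "t \<le> card S + card V"
proof -
  have "card ({..<t} - S) = card (g ` ({..<t} - S))" using assms(2) by (simp add: card_image)
  also have "\<dots> \<le> card V" using assms(3,4) by (intro card_mono) auto
  finally show ?thesis
    using assms(1) by (simp add: card_Diff_subset finite_subset)
qed

lemma ratio_ge_of_linear_bounds:
  fixes cost opt :: "nat \<Rightarrow> real"
  assumes lower: "\<And>n. real n \<le> cost n + b"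
    and opt: "\<And>n. k * opt n \<le> real n"
    and upper: "\<And>n. cost n \<le> c * opt n + \<alpha>"
    and "c \<ge> 0" "k > 0"
  shows "k \<le> c"
proof (rule ccontr)
  assume "\<not> k \<le> c"
  have bounded: "real n * (k - c) \<le> k * (\<alpha> + b)" for n
  proof -
    have "k * real n \<le> k * (c * opt n + \<alpha> + b)"
      using lower[of n] upper[of n] \<open>k > 0\<close> by (intro mult_left_mono) auto
    also have "\<dots> = c * (k * opt n) + k * (\<alpha> + b)" by (simp add: algebra_simps)
    also have "\<dots> \<le> c * real n + k * (\<alpha> + b)"
      using opt[of n] \<open>c \<ge> 0\<close> by (simp add: mult_left_mono)
    finally show ?thesis by (simp add: algebra_simps)
  qed
  obtain n :: nat where "real n > k * (\<alpha> + b) / (k - c)"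
    using reals_Archimedean2 by blast
  then have "real n * (k - c) > k * (\<alpha> + b)"
    using \<open>\<not> k \<le> c\<close> by (simp add: pos_divide_less_eq)
  with bounded[of n] show False by linarith
qed

definition fresh_label :: "'h set \<Rightarrow> ('h \<Rightarrow> 'h \<Rightarrow> bool) \<Rightarrow> (nat \<Rightarrow> (nat \<Rightarrow> nat \<Rightarrow> bool) \<Rightarrow> nat set)
    \<Rightarrow> nat \<Rightarrow> (nat \<Rightarrow> 'h) \<Rightarrow> 'h" where
  "fresh_label VH EH A t g = (SOME h. h \<in> VH \<and> h \<notin> g ` ({..<t} - A t (blowup EH g)))"

text \<open>Only the values below t are labels chosen by the adversary; the rest are placeholders.\<close>
fun adversary_labels :: "'h set \<Rightarrow> ('h \<Rightarrow> 'h \<Rightarrow> bool) \<Rightarrow> (nat \<Rightarrow> (nat \<Rightarrow> nat \<Rightarrow> bool) \<Rightarrow> nat set)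
    \<Rightarrow> 'h \<Rightarrow> nat \<Rightarrow> nat \<Rightarrow> 'h" where
  "adversary_labels VH EH A h0 0 = (\<lambda>_. h0)"
| "adversary_labels VH EH A h0 (Suc t) =
     (adversary_labels VH EH A h0 t)(t := fresh_label VH EH A t (adversary_labels VH EH A h0 t))"

lemma adversary_labels_stable:
  "i < t \<Longrightarrow> adversary_labels VH EH A h0 t i = adversary_labels VH EH A h0 (Suc i) i"
proof (induction t)
  case (Suc t)
  then show ?case by (cases "i = t") auto
qed simp

lemma fresh_label_missing_among_survivors:
  assumes "simple_graph_on VH EH" "valid_online_alg VH EH A" "\<forall>i. g i \<in> VH"
  shows "fresh_label VH EH A t g \<in> VH \<and>
    fresh_label VH EH A t g \<notin> g ` ({..<t} - A t (blowup EH g))"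
proof -
  have "sym_irrefl (blowup EH g)" using assms(1,3) by (rule sym_irrefl_blowup)
  then have "H_free VH EH ({..<t} - A t (blowup EH g)) (blowup EH g)"
    using assms(2) unfolding valid_online_alg_def by blast
  then have "\<not> VH \<subseteq> g ` ({..<t} - A t (blowup EH g))"
    using has_induced_copy_blowup unfolding H_free_def by blast
  then have "\<exists>h. h \<in> VH \<and> h \<notin> g ` ({..<t} - A t (blowup EH g))" by blast
  then show ?thesis unfolding fresh_label_def by (rule someI_ex)
qed

lemma adversary_labelling:
  assumes sg: "simple_graph_on VH EH" and va: "valid_online_alg VH EH A" and "h0 \<in> VH"
  obtains g where "\<forall>i. g i \<in> VH"
    and "\<And>t i. i < t \<Longrightarrow> i \<notin> A t (blowup EH g) \<Longrightarrow> g i \<noteq> g t"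
proof -
  define F where "F = adversary_labels VH EH A h0"
  define g where "g i = F (Suc i) i" for i
  have F_in: "\<forall>i. F t i \<in> VH" for t
  proof (induction t)
    case 0 then show ?case using \<open>h0 \<in> VH\<close> by (simp add: F_def)
  next
    case (Suc t) then show ?case using fresh_label_missing_among_survivors[OF sg va Suc] by (simp add: F_def)
  qed
  then have labels_in: "\<forall>i. g i \<in> VH" unfolding g_def by blast
  have F_g: "i < t \<Longrightarrow> F t i = g i" for i t
    unfolding F_def g_def by (rule adversary_labels_stable)
  have online: "\<forall>t E E'. (\<forall>i<t. \<forall>j<t. E i j = E' i j) \<longrightarrow> A t E = A t E'"
    using va unfolding valid_online_alg_def by (rule conjunct1)
  have "g i \<noteq> g t" if "i < t" "i \<notin> A t (blowup EH g)" for t i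
  proof -
    have "\<forall>i<t. \<forall>j<t. blowup EH (F t) i j = blowup EH g i j" using F_g by (simp add: blowup_def)
    with online have same_choice: "A t (blowup EH (F t)) = A t (blowup EH g)" by blast
    have "g t = fresh_label VH EH A t (F t)" by (simp add: g_def F_def)
    then have fresh: "g t \<notin> F t ` ({..<t} - A t (blowup EH g))"
      using fresh_label_missing_among_survivors[OF sg va F_in[of t], where t = t] same_choice by simp
    have "g i \<in> F t ` ({..<t} - A t (blowup EH g))"
      using that F_g[OF \<open>i < t\<close>, symmetric] by simp
    with fresh show ?thesis by auto
  qed
  with labels_in show ?thesis by (rule that)
qed

lemma adversary_cost_lower_bound:
  assumes sg: "simple_graph_on VH EH" and va: "valid_online_alg VH EH A"
    and labels: "\<forall>i. g i \<in> VH"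
    and fresh: "\<And>t i. i < t \<Longrightarrow> i \<notin> A t (blowup EH g) \<Longrightarrow> g i \<noteq> g t"
  shows "n \<le> card (A n (blowup EH g)) + card VH"
proof -
  have "sym_irrefl (blowup EH g)" using sg labels by (rule sym_irrefl_blowup)
  moreover have "\<forall>t E. sym_irrefl E \<longrightarrow>
      A t E \<subseteq> {..<t} \<and> A t E \<subseteq> A (Suc t) E \<and> H_free VH EH ({..<t} - A t E) E"
    using va unfolding valid_online_alg_def by (rule conjunct2)
  ultimately have A_sub: "A t (blowup EH g) \<subseteq> {..<t}"
    and A_mono: "A t (blowup EH g) \<subseteq> A (Suc t) (blowup EH g)" for t by blast+
  have "inj_on g ({..<n} - A n (blowup EH g))"
    by (rule inj_on_labels_survivors[where S = "\<lambda>t. A t (blowup EH g)", OF A_mono fresh])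
  moreover have "g ` {..<n} \<subseteq> VH" using labels by blast
  moreover have "finite VH" using sg unfolding simple_graph_on_def by blast
  ultimately show ?thesis by (rule le_card_deleted_add_card_labels[OF A_sub])
qed

theorem mainTheorem4:
  fixes VH :: "'h set" and EH :: "'h \<Rightarrow> 'h \<Rightarrow> bool"
    and A :: "nat \<Rightarrow> (nat \<Rightarrow> nat \<Rightarrow> bool) \<Rightarrow> nat set"
  assumes "simple_graph_on VH EH"
    and "connected_graph VH EH"
    and "card VH > 1"
    and "\<forall>u v. \<not> false_twins VH EH u v"
    and "valid_online_alg VH EH A"
  shows "competitive_ratio VH EH A \<ge> ereal (real (card VH))"
proof -
  have fin: "finite VH" using assms(1) unfolding simple_graph_on_def by blast
  have "VH \<noteq> {}" using assms(3) by auto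
  then obtain h0 where "h0 \<in> VH" by blast
  then obtain g where labels: "\<forall>i. g i \<in> VH"
    and fresh: "\<And>t i. i < t \<Longrightarrow> i \<notin> A t (blowup EH g) \<Longrightarrow> g i \<noteq> g t"
    using adversary_labelling[OF assms(1,5)] by blast
  have sym: "sym_irrefl (blowup EH g)" using assms(1) labels by (rule sym_irrefl_blowup)
  have "n \<le> card (A n (blowup EH g)) + card VH" for n
    using adversary_cost_lower_bound[OF assms(1,5) labels fresh] .
  then have cost: "real n \<le> real (card (A n (blowup EH g))) + real (card VH)" for n
    by (metis of_nat_add of_nat_le_iff)
  have opt: "real (card VH) * real (OPT VH EH n (blowup EH g)) \<le> real n" for n
    using card_mult_OPT_blowup_le[OF fin \<open>VH \<noteq> {}\<close> assms(4) labels]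
    by (metis of_nat_le_iff of_nat_mult)
  have "real (card VH) \<le> c" if "c \<ge> 1" and comp: "competitive VH EH A c" for c
  proof -
    obtain \<alpha> where "\<forall>n. real (card (A n (blowup EH g))) \<le> c * real (OPT VH EH n (blowup EH g)) + \<alpha>"
      using comp sym unfolding competitive_def by blast
    then show ?thesis
      by (intro ratio_ge_of_linear_bounds[OF cost opt]) (use \<open>c \<ge> 1\<close> assms(3) in auto)
  qed
  then show ?thesis unfolding competitive_ratio_def by (intro INF_greatest) simp
qed

end
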